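(* Let $N=\{n_1,\dots,n_m\}$ be a finite validator set ($m\ge 1$) in which validator $n_i$ has staked tokens $s_i>0$. Let $\rho_{\mathbb{N}_L}$ and $\rho_{\mathbb{N}_S}$ be the Nakamoto coefficients for liveness and safety of $N$ under the linear stake-weight model ($w_i=s_i$), and let $\rho^*_{\mathbb{N}_L}$ and $\rho^*_{\mathbb{N}_S}$ be those under the Square Root Stake Weight (SRSW) model ($w^*_i=\sqrt{s_i}$). Then $\rho^*_{\mathbb{N}_L}\ge \rho_{\mathbb{N}_L}$ and $\rho^*_{\mathbb{N}_S}\ge \rho_{\mathbb{N}_S}$.
   Context: Weighted consensus: each validator $n_i$ has a weight $w_i>0$ and $W=\sum_{i=1}^m w_i$. A quorum is $\mathbb{Q}=\tfrac{2}{3}W$. Nakamoto coefficient for liveness: $\mathbb{N}_L=\min\{|L| : L\subseteq N,\ \sum_{i\in L} w_i\ge \tfrac13 W\}$ and $\rho_{\mathbb{N}_L}=100\,\mathbb{N}_L/m$. Nakamoto coefficient for safety: $\mathbb{N}_S=\min\{|S| : S\subseteq N,\ \sum_{i\in S} w_i\ge \mathbb{Q}\}$ and $\rho_{\mathbb{N}_S}=\mathbb{N}_S/m$. In the linear model $w_i=s_i$; in the SRSW model $w_i=\sqrt{s_i}$; the coefficients for a model are computed with that model's weights. *)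

theory Defs
  imports Complex_Main
begin

definition total_weight :: "('a \<Rightarrow> real) \<Rightarrow> 'a set \<Rightarrow> real" where
  "total_weight w N = (\<Sum>i\<in>N. w i)"

definition nakamoto_liveness :: "('a \<Rightarrow> real) \<Rightarrow> 'a set \<Rightarrow> nat" where
  "nakamoto_liveness w N =
     Min {card L | L. L \<subseteq> N \<and> (\<Sum>i\<in>L. w i) \<ge> total_weight w N / 3}"

definition nakamoto_safety :: "('a \<Rightarrow> real) \<Rightarrow> 'a set \<Rightarrow> nat" where
  "nakamoto_safety w N =
     Min {card S | S. S \<subseteq> N \<and> (\<Sum>i\<in>S. w i) \<ge> 2 / 3 * total_weight w N}"

definition rho_liveness :: "('a \<Rightarrow> real) \<Rightarrow> 'a set \<Rightarrow> real" where
  "rho_liveness w N = 100 * real (nakamoto_liveness w N) / real (card N)"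

definition rho_safety :: "('a \<Rightarrow> real) \<Rightarrow> 'a set \<Rightarrow> real" where
  "rho_safety w N = real (nakamoto_safety w N) / real (card N)"

definition linear_weight :: "('a \<Rightarrow> real) \<Rightarrow> 'a \<Rightarrow> real" where
  "linear_weight s = s"

definition srsw_weight :: "('a \<Rightarrow> real) \<Rightarrow> 'a \<Rightarrow> real" where
  "srsw_weight s = (\<lambda>i. sqrt (s i))"

end

theory Submission
  imports Defs
begin

text \<open>Let L be a coalition holding a fraction a of the SRSW weight, and let T be a
  coalition of the same size with maximal SRSW weight. By an exchange argument T consists
  of the largest stakes, so \<open>sqrt (s t) * s r \<le> s t * sqrt (s r)\<close> for t \<in> T and r \<notin> T.
  Summing over all such pairs shows that the linear share of T is at least its SRSW share,
  hence at least a. So every SRSW coalition size above a threshold is also a linear one,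
  and both Nakamoto coefficients can only grow in the SRSW model.\<close>

lemma sum_share_le_cross:
  fixes u v :: "'a \<Rightarrow> real"
  assumes "finite N" and "T \<subseteq> N"
    and exch: "\<And>t r. t \<in> T \<Longrightarrow> r \<in> N - T \<Longrightarrow> u t * v r \<le> v t * u r"
  shows "(\<Sum>i\<in>T. u i) * (\<Sum>i\<in>N. v i) \<le> (\<Sum>i\<in>T. v i) * (\<Sum>i\<in>N. u i)"
proof -
  have split: "(\<Sum>i\<in>N. f i) = (\<Sum>i\<in>N - T. f i) + (\<Sum>i\<in>T. f i)" for f :: "'a \<Rightarrow> real"
    using assms(1,2) by (simp add: sum.subset_diff)
  have "(\<Sum>i\<in>T. u i) * (\<Sum>i\<in>N - T. v i) \<le> (\<Sum>i\<in>T. v i) * (\<Sum>i\<in>N - T. u i)"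
    unfolding sum_product by (intro sum_mono) (use exch in auto)
  then show ?thesis
    by (simp add: split[of u] split[of v] algebra_simps)
qed

lemma exists_heaviest_subset_same_card:
  fixes w :: "'a \<Rightarrow> real"
  assumes fin: "finite N" and "L \<subseteq> N"
  obtains T where "T \<subseteq> N" and "card T = card L" and "(\<Sum>i\<in>L. w i) \<le> (\<Sum>i\<in>T. w i)"
    and "\<And>t r. t \<in> T \<Longrightarrow> r \<in> N - T \<Longrightarrow> w r \<le> w t"
proof -
  define K where "K = {T. T \<subseteq> N \<and> card T = card L}"
  have "finite K"
    unfolding K_def using fin by simp
  moreover have "L \<in> K"
    unfolding K_def using \<open>L \<subseteq> N\<close> by simp
  ultimately obtain T where TK: "T \<in> K" and "sum w T = Max (sum w ` K)"
    by (metis (no_types, lifting) Max_in empty_iff finite_imageI image_iff)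
  with \<open>finite K\<close> have max: "\<And>T'. T' \<in> K \<Longrightarrow> sum w T' \<le> sum w T"
    by simp
  from TK have TN: "T \<subseteq> N" and cT: "card T = card L"
    unfolding K_def by auto
  have finT: "finite T"
    using TN fin finite_subset by blast
  have top: "w r \<le> w t" if t: "t \<in> T" and r: "r \<in> N - T" for t r
  proof -
    define T' where "T' = insert r (T - {t})"
    have "card T' = card T"
      unfolding T'_def using finT t r
      by (simp add: card_insert_if) (metis One_nat_def Suc_pred card_gt_0_iff empty_iff)
    then have "T' \<in> K"
      unfolding K_def T'_def using TN r cT by auto
    moreover have "sum w T' = sum w T - w t + w r"
      unfolding T'_def using finT t r by (simp add: sum_diff1)
    ultimately show "w r \<le> w t"
      using max[of T'] by linarith
  qed
  show thesis
    using that[OF TN cT max[OF \<open>L \<in> K\<close>] top] .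
qed

lemma sqrt_mult_le_mult_sqrt:
  fixes x y :: real
  assumes "0 \<le> x" and "x \<le> y"
  shows "sqrt y * x \<le> y * sqrt x"
proof -
  have "sqrt y * x = sqrt y * sqrt x * sqrt x"
    using assms by (simp add: mult.assoc)
  also have "\<dots> \<le> sqrt y * sqrt x * sqrt y"
    using assms by (intro mult_left_mono) auto
  also have "\<dots> = y * sqrt x"
    using assms by (simp add: mult_ac)
  finally show ?thesis .
qed

lemma srsw_coalition_imp_linear_coalition:
  fixes s :: "'a \<Rightarrow> real"
  assumes fin: "finite N" and pos: "\<And>i. i \<in> N \<Longrightarrow> s i > 0" and "L \<subseteq> N"
    and L: "a * (\<Sum>i\<in>N. sqrt (s i)) \<le> (\<Sum>i\<in>L. sqrt (s i))"
  obtains T where "T \<subseteq> N" and "card T = card L" and "a * (\<Sum>i\<in>N. s i) \<le> (\<Sum>i\<in>T. s i)"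
proof (cases "N = {}")
  case True
  then show thesis
    using that \<open>L \<subseteq> N\<close> by auto
next
  case False
  obtain T where TN: "T \<subseteq> N" and cT: "card T = card L"
    and heavier: "(\<Sum>i\<in>L. sqrt (s i)) \<le> (\<Sum>i\<in>T. sqrt (s i))"
    and top: "\<And>t r. t \<in> T \<Longrightarrow> r \<in> N - T \<Longrightarrow> sqrt (s r) \<le> sqrt (s t)"
    using exists_heaviest_subset_same_card[OF fin \<open>L \<subseteq> N\<close>] by blast
  have "sqrt (s t) * s r \<le> s t * sqrt (s r)" if "t \<in> T" "r \<in> N - T" for t r
    using top[OF that] pos[of r] that by (intro sqrt_mult_le_mult_sqrt) auto
  then have cross: "(\<Sum>i\<in>T. sqrt (s i)) * (\<Sum>i\<in>N. s i) \<le> (\<Sum>i\<in>T. s i) * (\<Sum>i\<in>N. sqrt (s i))"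
    using sum_share_le_cross[where u="\<lambda>i. sqrt (s i)" and v=s, OF fin TN] by blast
  have "0 \<le> (\<Sum>i\<in>N. s i)"
    using pos by (simp add: sum_nonneg less_imp_le)
  then have "a * (\<Sum>i\<in>N. sqrt (s i)) * (\<Sum>i\<in>N. s i) \<le> (\<Sum>i\<in>T. sqrt (s i)) * (\<Sum>i\<in>N. s i)"
    using L heavier by (intro mult_right_mono) auto
  also have "\<dots> \<le> (\<Sum>i\<in>T. s i) * (\<Sum>i\<in>N. sqrt (s i))"
    by (fact cross)
  finally have "(a * (\<Sum>i\<in>N. s i)) * (\<Sum>i\<in>N. sqrt (s i)) \<le> (\<Sum>i\<in>T. s i) * (\<Sum>i\<in>N. sqrt (s i))"
    by (simp add: mult_ac)
  moreover have "0 < (\<Sum>i\<in>N. sqrt (s i))"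
    using fin False pos by (intro sum_pos) auto
  ultimately show thesis
    using that TN cT by simp
qed

definition coalition_sizes :: "('a \<Rightarrow> real) \<Rightarrow> 'a set \<Rightarrow> real \<Rightarrow> nat set" where
  "coalition_sizes w N a = {card L | L. L \<subseteq> N \<and> a * total_weight w N \<le> (\<Sum>i\<in>L. w i)}"

lemma nakamoto_liveness_eq_Min_coalition_sizes:
  "nakamoto_liveness w N = Min (coalition_sizes w N (1/3))"
  unfolding nakamoto_liveness_def coalition_sizes_def by simp

lemma nakamoto_safety_eq_Min_coalition_sizes:
  "nakamoto_safety w N = Min (coalition_sizes w N (2/3))"
  unfolding nakamoto_safety_def coalition_sizes_def by simp

lemma Min_coalition_sizes_linear_le_srsw:
  fixes s :: "'a \<Rightarrow> real"
  assumes fin: "finite N" and pos: "\<And>i. i \<in> N \<Longrightarrow> s i > 0" and "a \<le> 1"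
  shows "Min (coalition_sizes (linear_weight s) N a) \<le> Min (coalition_sizes (srsw_weight s) N a)"
proof -
  let ?lin = "coalition_sizes (linear_weight s) N a"
  let ?sr = "coalition_sizes (srsw_weight s) N a"
  have finite_sizes: "finite (coalition_sizes w N a)" for w :: "'a \<Rightarrow> real"
    unfolding coalition_sizes_def using fin by (auto intro: finite_subset[of _ "card ` Pow N"])
  have "0 \<le> total_weight (srsw_weight s) N"
    unfolding total_weight_def srsw_weight_def using pos by (simp add: sum_nonneg less_imp_le)
  then have "a * total_weight (srsw_weight s) N \<le> total_weight (srsw_weight s) N"
    using \<open>a \<le> 1\<close> mult_right_mono[of a 1] by simp
  then have "card N \<in> ?sr"
    unfolding coalition_sizes_def total_weight_def by (intro CollectI exI[of _ N]) simp
  then have "Min ?sr \<in> ?sr"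
    using finite_sizes by (intro Min_in) auto
  then obtain L where "L \<subseteq> N" and "Min ?sr = card L"
    and "a * (\<Sum>i\<in>N. sqrt (s i)) \<le> (\<Sum>i\<in>L. sqrt (s i))"
    unfolding coalition_sizes_def total_weight_def srsw_weight_def by auto
  moreover obtain T where "T \<subseteq> N" and "card T = card L" and "a * (\<Sum>i\<in>N. s i) \<le> (\<Sum>i\<in>T. s i)"
    using srsw_coalition_imp_linear_coalition[OF fin pos calculation(1,3)] .
  then have "card L \<in> ?lin"
    unfolding coalition_sizes_def total_weight_def linear_weight_def
    by (intro CollectI exI[of _ T]) simp
  ultimately show ?thesis
    using finite_sizes by simp
qed

theorem lemma1:
  fixes N :: "'a set" and s :: "'a \<Rightarrow> real"
  assumes "finite N" and "N \<noteq> {}"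
    and "\<And>i. i \<in> N \<Longrightarrow> s i > 0"
  shows "rho_liveness (srsw_weight s) N \<ge> rho_liveness (linear_weight s) N
       \<and> rho_safety (srsw_weight s) N \<ge> rho_safety (linear_weight s) N"
proof -
  have "nakamoto_liveness (linear_weight s) N \<le> nakamoto_liveness (srsw_weight s) N"
    and "nakamoto_safety (linear_weight s) N \<le> nakamoto_safety (srsw_weight s) N"
    unfolding nakamoto_liveness_eq_Min_coalition_sizes nakamoto_safety_eq_Min_coalition_sizes
    using Min_coalition_sizes_linear_le_srsw[OF assms(1,3)] by simp_all
  then show ?thesis
    unfolding rho_liveness_def rho_safety_def by (auto intro!: divide_right_mono)
qed

end
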